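(* Let $\mathcal{T}$ be a finite tree whose vertex set is partitioned into two sets $X$ and $Y$ with $\mathrm{Card}(X),\mathrm{Card}(Y)\ge 2$, every edge joining a vertex of $X$ to a vertex of $Y$; let $E\subseteq X\times Y$ be its set of edges. For $x\in X$, $y\in Y$ let $Y_x=\{y\in Y:(x,y)\in E\}$ and $X_y=\{x\in X:(x,y)\in E\}$. Let $(G,+)$ be an abelian group and $H$ a subgroup of $G$. Suppose $g:X\cup Y\cup E\to G$ satisfies: (1) $g(X\cup Y)\subseteq H$; (2) for all $x\in X$, $g(x)=\sum_{y\in Y_x}g(x,y)$, and for all $y\in Y$, $g(y)=\sum_{x\in X_y}g(x,y)$. Then $g(x,y)\in H$ for all $(x,y)\in E$. *)

theory Defs
  imports Main
begin

definition adj :: "('v \<times> 'v) set \<Rightarrow> 'v \<Rightarrow> 'v \<Rightarrow> bool" where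
  "adj E u v \<longleftrightarrow> (u, v) \<in> E \<or> (v, u) \<in> E"

definition is_walk :: "'v set \<Rightarrow> ('v \<times> 'v) set \<Rightarrow> 'v list \<Rightarrow> bool" where
  "is_walk V E ps \<longleftrightarrow> ps \<noteq> [] \<and> set ps \<subseteq> V \<and>
     (\<forall>i. Suc i < length ps \<longrightarrow> adj E (ps ! i) (ps ! Suc i))"

definition graph_connected :: "'v set \<Rightarrow> ('v \<times> 'v) set \<Rightarrow> bool" where
  "graph_connected V E \<longleftrightarrow>
     (\<forall>u\<in>V. \<forall>v\<in>V. \<exists>ps. is_walk V E ps \<and> hd ps = u \<and> last ps = v)"

definition is_cycle :: "'v set \<Rightarrow> ('v \<times> 'v) set \<Rightarrow> 'v list \<Rightarrow> bool" where
  "is_cycle V E cs \<longleftrightarrow> length cs \<ge> 3 \<and> distinct cs \<and> is_walk V E cs \<and>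
     adj E (last cs) (hd cs)"

definition graph_acyclic :: "'v set \<Rightarrow> ('v \<times> 'v) set \<Rightarrow> bool" where
  "graph_acyclic V E \<longleftrightarrow> \<not> (\<exists>cs. is_cycle V E cs)"

definition bipartite_tree :: "'v set \<Rightarrow> 'v set \<Rightarrow> ('v \<times> 'v) set \<Rightarrow> bool" where
  "bipartite_tree X Y E \<longleftrightarrow> finite X \<and> finite Y \<and> X \<inter> Y = {} \<and> E \<subseteq> X \<times> Y \<and>
     X \<union> Y \<noteq> {} \<and> graph_connected (X \<union> Y) E \<and> graph_acyclic (X \<union> Y) E"

definition add_subgroup :: "'a::ab_group_add set \<Rightarrow> bool" where
  "add_subgroup H \<longleftrightarrow> 0 \<in> H \<and> (\<forall>a\<in>H. \<forall>b\<in>H. a + b \<in> H) \<and> (\<forall>a\<in>H. - a \<in> H)"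

end

theory Submission
  imports Defs
begin

text \<open>A finite forest with at least one edge has a leaf \<open>v\<close>; its unique edge \<open>e\<close> carries
  \<open>g(e) = g(v) \<in> H\<close>. Deleting \<open>e\<close>, setting the label of \<open>v\<close> to \<open>0\<close> and subtracting \<open>g(e)\<close> from the
  label of the other endpoint keeps the vertex labels in \<open>H\<close> and both summation identities
  intact, so induction on the number of edges finishes the proof.\<close>

lemma add_subgroup_diff:
  assumes "add_subgroup H" "a \<in> H" "b \<in> H"
  shows "a - b \<in> H"
  using assms unfolding add_subgroup_def by (metis diff_conv_add_uminus)

lemma is_walk_mono: "is_walk V E ps \<Longrightarrow> E \<subseteq> E' \<Longrightarrow> is_walk V E' ps"
  unfolding is_walk_def adj_def by blast

lemma graph_acyclic_antimono: "graph_acyclic V E' \<Longrightarrow> E \<subseteq> E' \<Longrightarrow> graph_acyclic V E"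
  unfolding graph_acyclic_def is_cycle_def adj_def using is_walk_mono[of V E _ E']
  by (metis (no_types, lifting) in_mono)

lemma is_walk_snoc:
  assumes "is_walk V E ps" "w \<in> V" "adj E (last ps) w"
  shows "is_walk V E (ps @ [w])"
  unfolding is_walk_def
proof (intro conjI allI impI)
  show "set (ps @ [w]) \<subseteq> V" using assms(1,2) unfolding is_walk_def by auto
  fix i assume i: "Suc i < length (ps @ [w])"
  show "adj E ((ps @ [w]) ! i) ((ps @ [w]) ! Suc i)"
  proof (cases "Suc i < length ps")
    case True
    then show ?thesis using assms(1) unfolding is_walk_def by (auto simp: nth_append)
  next
    case False
    with i have "i = length ps - 1" by simp
    with False show ?thesis using assms(1,3) unfolding is_walk_def by (simp add: nth_append last_conv_nth)
  qed
qed simp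

lemma is_walk_drop:
  assumes "is_walk V E ps" "j < length ps"
  shows "is_walk V E (drop j ps)"
  using assms set_drop_subset[of j ps] unfolding is_walk_def by (auto simp: add.commute)

lemma finite_distinct_walks:
  assumes "finite V"
  shows "finite {ps. is_walk V E ps \<and> distinct ps}"
proof (rule finite_subset)
  show "{ps. is_walk V E ps \<and> distinct ps} \<subseteq> {ps. set ps \<subseteq> V \<and> length ps \<le> card V}"
    unfolding is_walk_def using assms by (auto simp: card_mono simp flip: distinct_card)
  show "finite {ps. set ps \<subseteq> V \<and> length ps \<le> card V}"
    using finite_lists_length_le[OF assms] by simp
qed

text \<open>A neighbour of the last vertex of a longest path is either off the path (and extends it)
  or, unless it is the penultimate vertex, closes a cycle with a suffix of the path.\<close>

lemma longest_path_end_neighbour: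
  assumes acyc: "graph_acyclic V E" and EV: "E \<subseteq> V \<times> V" and loop_free: "\<And>u. (u, u) \<notin> E"
    and path: "is_walk V E ps" "distinct ps"
    and longest: "\<And>qs. is_walk V E qs \<Longrightarrow> distinct qs \<Longrightarrow> length qs \<le> length ps"
    and nb: "adj E (last ps) w"
  shows "w = ps ! (length ps - 2)"
proof -
  define n where "n = length ps"
  have last_ps: "last ps = ps ! (n - 1)"
    using path(1) unfolding is_walk_def n_def by (simp add: last_conv_nth)
  have "w \<in> set ps"
  proof (rule ccontr)
    assume "w \<notin> set ps"
    moreover have "w \<in> V" using nb EV unfolding adj_def by auto
    ultimately have "length (ps @ [w]) \<le> length ps"
      using longest is_walk_snoc[OF path(1) _ nb] path(2) by (simp del: length_append)
    then show False by simp
  qed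
  then obtain j where j: "j < n" "ps ! j = w" unfolding n_def by (metis in_set_conv_nth)
  have "j \<noteq> n - 1" using j last_ps nb loop_free unfolding adj_def by auto
  show ?thesis
  proof (rule ccontr)
    assume "w \<noteq> ps ! (length ps - 2)"
    with j have "j \<noteq> n - 2" unfolding n_def by auto
    with j \<open>j \<noteq> n - 1\<close> have "j + 3 \<le> n" by linarith
    then have "is_cycle V E (drop j ps)"
      unfolding is_cycle_def n_def
      using path is_walk_drop[OF path(1), of j] nb j
      by (auto simp: hd_drop_conv_nth n_def)
    then show False using acyc unfolding graph_acyclic_def by blast
  qed
qed

lemma acyclic_graph_has_leaf:
  assumes fin: "finite V" and EV: "E \<subseteq> V \<times> V" and loop_free: "\<And>u. (u, u) \<notin> E"
    and ne: "E \<noteq> {}" and acyc: "graph_acyclic V E"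
  obtains v w where "adj E v w" and "\<And>w'. adj E v w' \<Longrightarrow> w' = w"
proof -
  define P where "P = {ps. is_walk V E ps \<and> distinct ps}"
  have finP: "finite P" using finite_distinct_walks[OF fin] unfolding P_def .
  obtain a b where ab: "(a, b) \<in> E" using ne by auto
  have abP: "[a, b] \<in> P"
    using ab EV loop_free[of a] unfolding P_def is_walk_def adj_def by (auto simp: less_Suc_eq)
  have "Max (length ` P) \<in> length ` P" using finP abP by (intro Max_in) auto
  then obtain ps where ps: "ps \<in> P" "length ps = Max (length ` P)" by auto
  have longest: "length qs \<le> length ps" if "qs \<in> P" for qs
    using finP that ps(2) by simp
  have two: "2 \<le> length ps" using longest[OF abP] by simp
  have walk: "is_walk V E ps" "distinct ps" using ps(1) unfolding P_def by auto
  have "adj E (ps ! (length ps - 2)) (ps ! Suc (length ps - 2))"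
    using walk(1) two unfolding is_walk_def by simp
  moreover have "ps ! Suc (length ps - 2) = last ps"
    using walk(1) two unfolding is_walk_def by (simp add: last_conv_nth Suc_diff_Suc numeral_2_eq_2)
  ultimately have "adj E (last ps) (ps ! (length ps - 2))" unfolding adj_def by auto
  moreover have "w' = ps ! (length ps - 2)" if "adj E (last ps) w'" for w'
    using longest_path_end_neighbour[OF acyc EV loop_free walk _ that] longest
    unfolding P_def by blast
  ultimately show ?thesis using that by blast
qed

definition edge_sums ::
    "'v set \<Rightarrow> 'v set \<Rightarrow> ('v \<times> 'v) set \<Rightarrow> ('v \<Rightarrow> 'a::comm_monoid_add) \<Rightarrow> ('v \<times> 'v \<Rightarrow> 'a) \<Rightarrow> bool" where
  "edge_sums X Y E gv ge \<longleftrightarrow>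
     (\<forall>x\<in>X. gv x = (\<Sum>y\<in>{y\<in>Y. (x, y) \<in> E}. ge (x, y))) \<and>
     (\<forall>y\<in>Y. gv y = (\<Sum>x\<in>{x\<in>X. (x, y) \<in> E}. ge (x, y)))"

lemma edge_sums_converse:
  "edge_sums Y X (E\<inverse>) gv (ge \<circ> prod.swap) \<longleftrightarrow> edge_sums X Y E gv ge"
  unfolding edge_sums_def by auto

lemma edge_sums_remove_leaf_edge:
  fixes gv :: "'v \<Rightarrow> 'a::ab_group_add"
  assumes sums: "edge_sums X Y E gv ge" and fin: "finite X" and disj: "X \<inter> Y = {}"
    and x: "x \<in> X" and leaf: "{y\<in>Y. (x, y) \<in> E} = {w}"
  shows "ge (x, w) = gv x"
    and "edge_sums X Y (E - {(x, w)}) (gv(x := 0, w := gv w - gv x)) ge"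
proof -
  have sX: "\<And>x. x \<in> X \<Longrightarrow> gv x = (\<Sum>y\<in>{y\<in>Y. (x, y) \<in> E}. ge (x, y))"
    and sY: "\<And>y. y \<in> Y \<Longrightarrow> gv y = (\<Sum>x\<in>{x\<in>X. (x, y) \<in> E}. ge (x, y))"
    using sums unfolding edge_sums_def by auto
  have w: "w \<in> Y" "(x, w) \<in> E" using leaf by auto
  have "x \<noteq> w" using x w disj by blast
  show ge_leaf: "ge (x, w) = gv x" using sX[OF x] leaf by simp
  show "edge_sums X Y (E - {(x, w)}) (gv(x := 0, w := gv w - gv x)) ge"
    unfolding edge_sums_def
  proof (intro conjI ballI)
    fix x' assume x': "x' \<in> X"
    show "(gv(x := 0, w := gv w - gv x)) x' = (\<Sum>y\<in>{y\<in>Y. (x', y) \<in> E - {(x, w)}}. ge (x', y))"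
    proof (cases "x' = x")
      case True
      have no_edges: "{y\<in>Y. (x, y) \<in> E - {(x, w)}} = {}" using leaf by auto
      show ?thesis unfolding True no_edges using \<open>x \<noteq> w\<close> by simp
    next
      case False
      then have "{y\<in>Y. (x', y) \<in> E - {(x, w)}} = {y\<in>Y. (x', y) \<in> E}" by auto
      then show ?thesis using False sX[OF x'] x' w disj by auto
    qed
  next
    fix y assume y: "y \<in> Y"
    show "(gv(x := 0, w := gv w - gv x)) y = (\<Sum>x'\<in>{x'\<in>X. (x', y) \<in> E - {(x, w)}}. ge (x', y))"
    proof (cases "y = w")
      case True
      then have "{x'\<in>X. (x', y) \<in> E - {(x, w)}} = {x'\<in>X. (x', w) \<in> E} - {x}" by auto
      then show ?thesis using True sY[OF y] ge_leaf x w disj fin by (auto simp: sum_diff1)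
    next
      case False
      then have "{x'\<in>X. (x', y) \<in> E - {(x, w)}} = {x'\<in>X. (x', y) \<in> E}" by auto
      then show ?thesis using False sY[OF y] x y disj by auto
    qed
  qed
qed

lemma edge_sums_remove_leaf:
  fixes gv :: "'v \<Rightarrow> 'a::ab_group_add"
  assumes sums: "edge_sums X Y E gv ge" and fin: "finite X" "finite Y" and disj: "X \<inter> Y = {}"
    and bip: "E \<subseteq> X \<times> Y" and leaf: "adj E v w" "\<And>w'. adj E v w' \<Longrightarrow> w' = w"
  obtains e where "e \<in> E" and "ge e = gv v"
    and "edge_sums X Y (E - {e}) (gv(v := 0, w := gv w - gv v)) ge"
proof (cases "v \<in> X")
  case True
  then have "{y\<in>Y. (v, y) \<in> E} = {w}" using bip disj leaf unfolding adj_def by blast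
  then show ?thesis using that edge_sums_remove_leaf_edge[OF sums fin(1) disj True] by blast
next
  case False
  \<comment> \<open>A leaf in \<open>Y\<close> is a leaf in the first part of the converse graph.\<close>
  then have v: "v \<in> Y" and "(w, v) \<in> E" using bip leaf(1) unfolding adj_def by auto
  have "{x\<in>X. (v, x) \<in> E\<inverse>} = {w}" using bip disj leaf v unfolding adj_def by blast
  moreover have "edge_sums Y X (E\<inverse>) gv (ge \<circ> prod.swap)" using sums by (simp add: edge_sums_converse)
  moreover have "Y \<inter> X = {}" using disj by blast
  ultimately have "ge (w, v) = gv v"
    and "edge_sums Y X (E\<inverse> - {(v, w)}) (gv(v := 0, w := gv w - gv v)) (ge \<circ> prod.swap)"
    using edge_sums_remove_leaf_edge[of Y X "E\<inverse>" gv "ge \<circ> prod.swap" v w] fin(2) v by simp_all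
  moreover have "E\<inverse> - {(v, w)} = (E - {(w, v)})\<inverse>" by auto
  ultimately show ?thesis using that \<open>(w, v) \<in> E\<close> by (simp add: edge_sums_converse)
qed

lemma bipartite_forest_edge_sums_in_subgroup:
  fixes gv :: "'v \<Rightarrow> 'a::ab_group_add"
  assumes fin: "finite X" "finite Y" and disj: "X \<inter> Y = {}" and H: "add_subgroup H"
  shows "E \<subseteq> X \<times> Y \<Longrightarrow> graph_acyclic (X \<union> Y) E \<Longrightarrow> gv ` (X \<union> Y) \<subseteq> H \<Longrightarrow>
    edge_sums X Y E gv ge \<Longrightarrow> ge ` E \<subseteq> H"
proof (induction "card E" arbitrary: E gv rule: less_induct)
  case (less E gv)
  note bip = less.prems(1) and acyc = less.prems(2) and gv_H = less.prems(3)
    and sums = less.prems(4)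
  show ?case
  proof (cases "E = {}")
    case False
    have "E \<subseteq> (X \<union> Y) \<times> (X \<union> Y)" and "\<And>u. (u, u) \<notin> E" using bip disj by auto
    then obtain v w where leaf: "adj E v w" "\<And>w'. adj E v w' \<Longrightarrow> w' = w"
      using acyclic_graph_has_leaf[of "X \<union> Y" E] fin False acyc by blast
    then obtain e where e: "e \<in> E" "ge e = gv v"
      and sums': "edge_sums X Y (E - {e}) (gv(v := 0, w := gv w - gv v)) ge"
      using edge_sums_remove_leaf[OF sums fin disj bip] by blast
    have "v \<in> X \<union> Y" "w \<in> X \<union> Y" using leaf(1) bip unfolding adj_def by auto
    then have gv_vw: "gv v \<in> H" "gv w \<in> H" using gv_H by auto
    have "0 \<in> H" using H unfolding add_subgroup_def by blast
    then have gv'_H: "gv(v := 0, w := gv w - gv v) ` (X \<union> Y) \<subseteq> H"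
      using gv_H add_subgroup_diff[OF H gv_vw(2,1)] by (auto simp: image_subset_iff)
    have card_lt: "card (E - {e}) < card E"
      using e(1) bip fin by (meson card_Diff1_less finite_SigmaI finite_subset)
    have "E - {e} \<subseteq> X \<times> Y" using bip by blast
    moreover have "graph_acyclic (X \<union> Y) (E - {e})" using graph_acyclic_antimono[OF acyc] by blast
    ultimately have "ge ` (E - {e}) \<subseteq> H" using less.hyps[OF card_lt _ _ gv'_H sums'] by blast
    moreover have "ge e \<in> H" using e gv_vw by simp
    ultimately show ?thesis by blast
  qed simp
qed

theorem lemma3p2:
  fixes X Y :: "'v set" and E :: "('v \<times> 'v) set"
    and H :: "'a::ab_group_add set"
    and gv :: "'v \<Rightarrow> 'a" and ge :: "'v \<times> 'v \<Rightarrow> 'a"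
  assumes tree: "bipartite_tree X Y E"
    and cardX: "card X \<ge> 2" and cardY: "card Y \<ge> 2"
    and sub: "add_subgroup H"
    and vert: "gv ` (X \<union> Y) \<subseteq> H"
    and sumX: "\<And>x. x \<in> X \<Longrightarrow> gv x = (\<Sum>y\<in>{y\<in>Y. (x, y) \<in> E}. ge (x, y))"
    and sumY: "\<And>y. y \<in> Y \<Longrightarrow> gv y = (\<Sum>x\<in>{x\<in>X. (x, y) \<in> E}. ge (x, y))"
  shows "\<forall>e\<in>E. ge e \<in> H"
proof -
  have "edge_sums X Y E gv ge" using sumX sumY unfolding edge_sums_def by blast
  then show ?thesis
    using tree bipartite_forest_edge_sums_in_subgroup[OF _ _ _ sub _ _ vert]
    unfolding bipartite_tree_def by blast
qed

end
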